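(* Let $\mathrm{A}$ be a real symmetric positive definite $d\times d$ matrix which is admissible with some parameter $\tau>0$. Then for every $a=(a_n)_{n\in\mathbb{Z}^d}\in\ell^{2}(\mathbb{Z}^{d})$, \[ \sum_{\vec{n}=(n_{1},n_{2},n_{3},n)\in\Gamma_{0}}a_{n_{1}}\overline{a_{n_{2}}}a_{n_{3}}\overline{a_{n}}=2\Big(\sum_{n\in\mathbb{Z}^{d}}|a_{n}|^{2}\Big)^{2}-\sum_{n\in\mathbb{Z}^{d}}|a_{n}|^{4}, \] where $\Gamma_{0}=\{\vec n\in(\mathbb{Z}^{d})^{4}: n_{1}-n_{2}+n_{3}-n=0,\ \Omega(\vec n)=0\}$.
   Context: $\lambda_{n}^{2}=n^{\intercal}\mathrm{A}n$ for $n\in\mathbb{Z}^d$, $|n|$ Euclidean norm; $\Omega(\vec{n})=\lambda_{n_{1}}^{2}-\lambda_{n_{2}}^{2}+\lambda_{n_{3}}^{2}-\lambda_{n}^{2}$. $\mathrm{A}$ is admissible with parameter $\tau>0$ if there is $c>0$ such that $|a^{\intercal}\mathrm{A}b|\geq c|a|^{-\tau}|b|^{-\tau}$ for all $a,b\in\mathbb{Z}^{d}\setminus\{0\}$. *)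

theory Defs
  imports "HOL-Analysis.Analysis"
begin

definition rvec :: "int ^ 'd \<Rightarrow> real ^ 'd" where
  "rvec n = (\<chi> i. of_int (n $ i))"

definition lam2 :: "real ^ 'd ^ 'd \<Rightarrow> int ^ 'd \<Rightarrow> real" where
  "lam2 A n = rvec n \<bullet> (A *v rvec n)"

definition Omega :: "real ^ 'd ^ 'd \<Rightarrow> int ^ 'd \<Rightarrow> int ^ 'd \<Rightarrow> int ^ 'd \<Rightarrow> int ^ 'd \<Rightarrow> real" where
  "Omega A n1 n2 n3 n = lam2 A n1 - lam2 A n2 + lam2 A n3 - lam2 A n"

definition admissible :: "real ^ 'd ^ 'd \<Rightarrow> real \<Rightarrow> bool" where
  "admissible A \<tau> \<longleftrightarrow> (\<exists>c>0. \<forall>a b :: int ^ 'd. a \<noteq> 0 \<longrightarrow> b \<noteq> 0 \<longrightarrow>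
      \<bar>rvec a \<bullet> (A *v rvec b)\<bar> \<ge> c * norm (rvec a) powr (-\<tau>) * norm (rvec b) powr (-\<tau>))"

definition Gamma0 :: "real ^ 'd ^ 'd \<Rightarrow> ((int ^ 'd) \<times> (int ^ 'd) \<times> (int ^ 'd) \<times> (int ^ 'd)) set" where
  "Gamma0 A = {(n1, n2, n3, n). n1 - n2 + n3 - n = 0 \<and> Omega A n1 n2 n3 n = 0}"

end

theory Submission
  imports Defs
begin

text \<open>On the hyperplane \<open>n = n\<^sub>1 - n\<^sub>2 + n\<^sub>3\<close> the resonance function factors as
  \<open>\<Omega> = -2 (n\<^sub>1 - n\<^sub>2)\<^sup>T A (n\<^sub>3 - n\<^sub>2)\<close>, and admissibility forbids this bilinear form
  to vanish on two nonzero lattice vectors. Hence \<open>\<Gamma>\<^sub>0\<close> consists only of the trivial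
  resonances \<open>(m, m, k, k)\<close> and \<open>(m, k, k, m)\<close>; each family contributes
  \<open>(\<Sum> |a\<^sub>n|\<^sup>2)\<^sup>2\<close>, and the two overlap on the diagonal \<open>(m, m, m, m)\<close>, which contributes
  \<open>\<Sum> |a\<^sub>n|\<^sup>4\<close>.\<close>

lemma inner_matrix_vector_commute:
  fixes A :: "real ^ 'n ^ 'n"
  assumes "transpose A = A"
  shows "x \<bullet> (A *v y) = y \<bullet> (A *v x)"
  by (metis assms dot_lmul_matrix inner_commute vector_transpose_matrix)

lemma has_sum_Un_Int:
  fixes f :: "'a \<Rightarrow> 'b::topological_ab_group_add"
  assumes "(f has_sum a) A" and "(f has_sum b) B" and "(f has_sum c) (A \<inter> B)"
  shows "(f has_sum (a + b - c)) (A \<union> B)"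
proof -
  have "(f has_sum (b - c)) (B - A)"
    using has_sum_Diff[OF assms(2,3)] by (simp add: Diff_Int)
  from has_sum_Un_disjoint[OF assms(1) this] show ?thesis
    by (simp add: add_diff_eq)
qed

lemma has_sum_product_nonneg:
  fixes f g :: "'a \<Rightarrow> real"
  assumes f: "(f has_sum S) A" and g: "(g has_sum T) B"
    and "\<And>x. x \<in> A \<Longrightarrow> f x \<ge> 0" and "\<And>y. y \<in> B \<Longrightarrow> g y \<ge> 0"
  shows "((\<lambda>(x, y). f x * g y) has_sum S * T) (A \<times> B)"
proof (rule has_sum_SigmaI)
  show row: "((\<lambda>y. case (x, y) of (x, y) \<Rightarrow> f x * g y) has_sum f x * T) B" for x
    using has_sum_cmult_right[OF g] by simp
  show "((\<lambda>x. f x * T) has_sum S * T) A"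
    using has_sum_cmult_left[OF f] .
  then show "(\<lambda>(x, y). f x * g y) summable_on A \<times> B"
    by (intro summable_on_SigmaI[OF row]) (auto simp: assms summable_on_def)
qed

lemma rvec_add [simp]: "rvec (x + y) = rvec x + rvec y"
  by (simp add: rvec_def vec_eq_iff)

lemma rvec_diff [simp]: "rvec (x - y) = rvec x - rvec y"
  by (simp add: rvec_def vec_eq_iff)

lemma rvec_eq_0_iff [simp]: "rvec x = 0 \<longleftrightarrow> x = 0"
  by (simp add: rvec_def vec_eq_iff)

lemma Omega_conservation:
  fixes A :: "real ^ 'd ^ 'd"
  assumes "transpose A = A"
  shows "Omega A n1 n2 n3 (n1 - n2 + n3) = -2 * (rvec (n1 - n2) \<bullet> (A *v rvec (n3 - n2)))"
proof -
  define u v w where "u = rvec (n1 - n2)" and "v = rvec (n3 - n2)" and "w = rvec n2"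
  have "rvec n1 = w + u" "rvec n3 = w + v" "rvec (n1 - n2 + n3) = w + u + v"
    by (simp_all add: u_def v_def w_def)
  moreover have "v \<bullet> (A *v u) = u \<bullet> (A *v v)" "w \<bullet> (A *v u) = u \<bullet> (A *v w)"
    "w \<bullet> (A *v v) = v \<bullet> (A *v w)"
    by (simp_all add: inner_matrix_vector_commute[OF assms])
  ultimately show ?thesis
    unfolding Omega_def lam2_def u_def[symmetric] v_def[symmetric] w_def
    by (simp add: matrix_vector_right_distrib inner_add_left inner_add_right)
qed

lemma admissible_inner_nonzero:
  assumes "admissible A \<tau>" and "a \<noteq> 0" and "b \<noteq> 0"
  shows "rvec a \<bullet> (A *v rvec b) \<noteq> 0"
proof -
  obtain c where "c > 0" and
    "\<bar>rvec a \<bullet> (A *v rvec b)\<bar> \<ge> c * norm (rvec a) powr (-\<tau>) * norm (rvec b) powr (-\<tau>)"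
    using assms unfolding admissible_def by blast
  moreover have "norm (rvec a) powr (-\<tau>) > 0" "norm (rvec b) powr (-\<tau>) > 0"
    using assms(2,3) by simp_all
  ultimately have "\<bar>rvec a \<bullet> (A *v rvec b)\<bar> > 0"
    by (smt (verit) mult_pos_pos)
  then show ?thesis
    by simp
qed

lemma Gamma0_eq_trivial_resonances:
  fixes A :: "real ^ 'd ^ 'd"
  assumes "transpose A = A" and "admissible A \<tau>"
  shows "Gamma0 A = range (\<lambda>(m, k). (m, m, k, k)) \<union> range (\<lambda>(m, k). (m, k, k, m))"
proof -
  have "(n1, n2, n3, n) \<in> Gamma0 A \<longleftrightarrow> n = n1 - n2 + n3 \<and> (n1 = n2 \<or> n3 = n2)" for n1 n2 n3 n
  proof (cases "n = n1 - n2 + n3")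
    case True
    have "Omega A n1 n2 n3 n = 0 \<longleftrightarrow> n1 - n2 = 0 \<or> n3 - n2 = 0"
      using admissible_inner_nonzero[OF assms(2), of "n1 - n2" "n3 - n2"]
      by (auto simp: True Omega_conservation[OF assms(1)])
    with True show ?thesis
      by (simp add: Gamma0_def)
  qed (auto simp: Gamma0_def algebra_simps)
  then show ?thesis
    by (auto simp: image_iff)
qed

lemma has_sum_trivial_resonances:
  fixes a :: "'a \<Rightarrow> complex"
  assumes l2: "(\<lambda>n. (norm (a n))\<^sup>2) summable_on UNIV"
  shows "((\<lambda>(n1, n2, n3, n). a n1 * cnj (a n2) * a n3 * cnj (a n)) has_sum
           complex_of_real (2 * (\<Sum>\<^sub>\<infinity>n. (norm (a n))\<^sup>2)\<^sup>2 - (\<Sum>\<^sub>\<infinity>n. (norm (a n)) ^ 4)))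
         (range (\<lambda>(m, k). (m, m, k, k)) \<union> range (\<lambda>(m, k). (m, k, k, m)))"
proof -
  define F where "F = (\<lambda>(n1, n2, n3, n). a n1 * cnj (a n2) * a n3 * cnj (a n))"
  define g where "g n = (norm (a n))\<^sup>2" for n
  define S where "S = (\<Sum>\<^sub>\<infinity>n. g n)"
  define T where "T = (\<Sum>\<^sub>\<infinity>n. (norm (a n)) ^ 4)"
  have a_cnj: "a n * cnj (a n) = of_real (g n)" for n
    by (simp only: g_def complex_norm_square)
  have F_mmkk: "F (m, m, k, k) = of_real (g m * g k)" and F_mkkm: "F (m, k, k, m) = of_real (g m * g k)"
    for m k
    unfolding of_real_mult a_cnj[symmetric] F_def by (simp_all add: mult_ac)
  have pairs: "((\<lambda>(m, k). g m * g k) has_sum S * S) (UNIV \<times> UNIV)"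
    using l2 by (intro has_sum_product_nonneg) (simp_all add: g_def S_def)
  have pairs_complex: "((\<lambda>(m, k). of_real (g m * g k)) has_sum complex_of_real (S * S)) UNIV"
    using has_sum_of_real[OF pairs] by (simp add: case_prod_unfold)
  have "((\<lambda>m. g m * g m) has_sum T) UNIV"
  proof -
    have "(\<lambda>(m, k). g m * g k) summable_on range (\<lambda>m. (m, m))"
      using pairs by (rule summable_on_subset_banach[OF has_sum_imp_summable]) simp
    then have "(\<lambda>m. g m * g m) summable_on UNIV"
      by (simp add: summable_on_reindex inj_on_def o_def)
    moreover have "g m * g m = (norm (a m)) ^ 4" for m
      by (simp add: g_def flip: power_add)
    ultimately show ?thesis
      by (simp add: T_def)
  qed
  from has_sum_of_real[OF this]
  have diagonal: "(F has_sum of_real T) (range (\<lambda>m. (m, m, m, m)))"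
    by (subst has_sum_reindex) (auto simp: inj_on_def o_def F_mmkk)
  have pairs_mmkk: "(F has_sum of_real (S * S)) (range (\<lambda>(m, k). (m, m, k, k)))"
    using pairs_complex
    by (subst has_sum_reindex) (auto simp: inj_on_def o_def case_prod_unfold F_mmkk)
  have pairs_mkkm: "(F has_sum of_real (S * S)) (range (\<lambda>(m, k). (m, k, k, m)))"
    using pairs_complex
    by (subst has_sum_reindex) (auto simp: inj_on_def o_def case_prod_unfold F_mkkm)
  have overlap: "range (\<lambda>(m, k). (m, m, k, k)) \<inter> range (\<lambda>(m, k). (m, k, k, m)) = range (\<lambda>m. (m, m, m, m))"
    by auto
  from has_sum_Un_Int[OF pairs_mmkk pairs_mkkm, unfolded overlap, OF diagonal]
  show ?thesis
    by (simp add: F_def S_def T_def g_def power2_eq_square)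
qed

theorem lemma2p6:
  fixes A :: "real ^ 'd ^ 'd" and \<tau> :: real and a :: "int ^ 'd \<Rightarrow> complex"
  assumes symm: "transpose A = A"
    and posdef: "\<forall>x :: real ^ 'd. x \<noteq> 0 \<longrightarrow> x \<bullet> (A *v x) > 0"
    and tau: "\<tau> > 0"
    and adm: "admissible A \<tau>"
    and l2: "(\<lambda>n. (norm (a n))\<^sup>2) summable_on UNIV"
  shows "((\<lambda>(n1, n2, n3, n). a n1 * cnj (a n2) * a n3 * cnj (a n)) has_sum
           complex_of_real (2 * (\<Sum>\<^sub>\<infinity>n. (norm (a n))\<^sup>2)\<^sup>2 - (\<Sum>\<^sub>\<infinity>n. (norm (a n)) ^ 4)))
         (Gamma0 A)"
  using has_sum_trivial_resonances[OF l2] by (simp add: Gamma0_eq_trivial_resonances[OF symm adm])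

end
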